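(* For every $n\ge0$, with $c_n,d_n$ and $R_{n,2},R_{n,1},R_{n,0}$ as below, $$P_n^{(\alpha,\beta,v)}(t)=n!\left(p_n^{(\alpha+2,\beta)}(1-2t)R_{n,2}t^2+p_n^{(\alpha+1,\beta)}(1-2t)R_{n,1}t+p_n^{(\alpha,\beta)}(1-2t)R_{n,0}\right)\widetilde W(t)^{-1}$$ and $$P_n^{(\alpha,\beta,v)}(t)=n!\left(p_n^{(\alpha,\beta)}(1-2t)\mathscr C_{n,2}+p_{n+1}^{(\alpha,\beta)}(1-2t)\mathscr C_{n,1}+p_{n+2}^{(\alpha,\beta)}(1-2t)\mathscr C_{n,0}\right)\widetilde W(t)^{-1},$$ where $$\mathscr C_{n,2}=\frac{(\beta+n+1)(\alpha+n+1)}{(\alpha+\beta+2n+2)(\alpha+\beta+2n+3)}\begin{pmatrix}\dfrac{c_n(\kappa_{-v,\beta}+2n+4)}{\kappa_{v,\beta}+2n+2}&0\\0&\dfrac{d_n(\kappa_{v,\beta}+2n+4)}{\kappa_{-v,\beta}+2n+2}\end{pmatrix},$$ $$\mathscr C_{n,1}=\frac{n+1}{v}\begin{pmatrix}\dfrac{(\alpha-\beta)(\kappa_{-v,\beta}+2n+4)c_n}{(\alpha+\beta+2n+2)(\alpha+\beta+2n+4)}&-\dfrac{c_n\kappa_{v,-\beta}}{\kappa_{v,\beta}+2n+2}\\[2mm]\dfrac{d_n\kappa_{-v,-\beta}}{\kappa_{-v,\beta}+2n+2}&-\dfrac{(\alpha-\beta)(\kappa_{v,\beta}+2n+4)d_n}{(\alpha+\beta+2n+2)(\alpha+\beta+2n+4)}\end{pmatrix},$$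 $$\mathscr C_{n,0}=\frac{(n+1)(n+2)}{(\alpha+\beta+2n+4)(\alpha+\beta+2n+3)}\begin{pmatrix}c_n&0\\0&d_n\end{pmatrix}.$$
   Context: Fix real numbers $\alpha,\beta,v$ with $\alpha>-1$, $\beta>-1$ and $|\alpha-\beta|<|v|<\alpha+\beta+2$. Write $\kappa_{\pm v,\pm\beta}=\alpha\pm v\pm\beta$. Define the $2\times2$ matrix polynomial $$\widetilde W(t)=\begin{pmatrix}\frac{v(\kappa_{v,\beta}+2)}{\kappa_{v,-\beta}}t^2-(\kappa_{v,\beta}+2)t+(\alpha+1) & (\alpha+\beta+2)t-(\alpha+1)\\ (\alpha+\beta+2)t-(\alpha+1) & -\frac{v(\kappa_{-v,\beta}+2)}{\kappa_{-v,-\beta}}t^2-(\kappa_{-v,\beta}+2)t+(\alpha+1)\end{pmatrix}$$ and $W(t)=t^\alpha(1-t)^\beta\widetilde W(t)$ on $(0,1)$; $\langle P,Q\rangle_W=\int_0^1P W Q^*dt$. $(P_n^{(\alpha,\beta,v)})_{n\ge0}$ is the sequence of monic $2\times2$ matrix polynomials orthogonal with respect to $W$. $p_n^{(a,b)}$ is the classical Jacobi polynomial, so that $p_n^{(a,b)}(1-2t)=\frac{\Gamma(n+a+1)}{n!\,\Gamma(n+a+b+1)}\sum_{j=0}^n\binom nj\frac{\Gamma(n+a+b+1+j)}{\Gamma(j+a+1)}(-1)^jt^j$. Set $c_n=\frac{(-1)^nv(\kappa_{v,\beta}+2)}{\kappa_{v,-\beta}(\alpha+\beta+n+3)_n}$,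 $d_n=\frac{(-1)^{n+1}v(\kappa_{-v,\beta}+2)}{\kappa_{-v,-\beta}(\alpha+\beta+n+3)_n}$ ($(x)_n$ the Pochhammer symbol), $R_{n,2}=\mathrm{diag}(c_n,d_n)$, $R_{n,1}=\frac1v\begin{pmatrix}-c_n\kappa_{v,-\beta} & \frac{c_n(\alpha+\beta+2n+2)\kappa_{v,-\beta}}{\kappa_{v,\beta}+2n+2}\\ -\frac{d_n(\alpha+\beta+2n+2)\kappa_{-v,-\beta}}{\kappa_{-v,\beta}+2n+2} & d_n\kappa_{-v,-\beta}\end{pmatrix}$, $R_{n,0}=\frac{1+n+\alpha}{v}\begin{pmatrix}\frac{c_n\kappa_{v,-\beta}}{\kappa_{v,\beta}+2n+2} & -\frac{c_n\kappa_{v,-\beta}}{\kappa_{v,\beta}+2n+2}\\ \frac{d_n\kappa_{-v,-\beta}}{\kappa_{-v,\beta}+2n+2} & -\frac{d_n\kappa_{-v,-\beta}}{\kappa_{-v,\beta}+2n+2}\end{pmatrix}$. *)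

theory Defs
  imports "HOL-Analysis.Analysis"
begin

type_synonym mat22 = "real^2^2"

definition mat2 :: "real \<Rightarrow> real \<Rightarrow> real \<Rightarrow> real \<Rightarrow> mat22" where
  "mat2 a b c d = vector [vector [a, b], vector [c, d]]"

text \<open>Writing x = 1 - 2t, i.e. t = (1-x)/2,
  the Gamma-quotients of the paper's formula are written as Pochhammer symbols:
  Gamma(n+a+1)/Gamma(j+a+1) = (j+a+1)_(n-j) and
  Gamma(n+a+b+1+j)/Gamma(n+a+b+1) = (n+a+b+1)_j.\<close>
definition jacobiP :: "nat \<Rightarrow> real \<Rightarrow> real \<Rightarrow> real \<Rightarrow> real" where
  "jacobiP n a b x = (1 / fact n) * (\<Sum>j\<le>n. real (n choose j)
       * pochhammer (real j + a + 1) (n - j) * pochhammer (real n + a + b + 1) j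
       * (-1) ^ j * ((1 - x) / 2) ^ j)"

text \<open>kappa_{s v, r beta} = alpha + s v + r beta\<close>
definition kappa :: "real \<Rightarrow> real \<Rightarrow> real \<Rightarrow> real" where
  "kappa al v be = al + v + be"

definition Wtilde :: "real \<Rightarrow> real \<Rightarrow> real \<Rightarrow> real \<Rightarrow> mat22" where
  "Wtilde al be v t = mat2
     (v * (kappa al v be + 2) / kappa al v (-be) * t^2 - (kappa al v be + 2) * t + (al + 1))
     ((al + be + 2) * t - (al + 1))
     ((al + be + 2) * t - (al + 1))
     (- v * (kappa al (-v) be + 2) / kappa al (-v) (-be) * t^2 - (kappa al (-v) be + 2) * t + (al + 1))"

definition Wmat :: "real \<Rightarrow> real \<Rightarrow> real \<Rightarrow> real \<Rightarrow> mat22" where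
  "Wmat al be v t = (t powr al * (1 - t) powr be) *\<^sub>R Wtilde al be v t"

definition mip :: "(real \<Rightarrow> mat22) \<Rightarrow> (real \<Rightarrow> mat22) \<Rightarrow> (real \<Rightarrow> mat22) \<Rightarrow> mat22" where
  "mip W P Q = integral {0..1} (\<lambda>t. P t ** W t ** transpose (Q t))"

definition is_mpoly :: "nat \<Rightarrow> (real \<Rightarrow> mat22) \<Rightarrow> bool" where
  "is_mpoly m Q \<longleftrightarrow> (\<exists>B :: nat \<Rightarrow> mat22. \<forall>t. Q t = (\<Sum>k\<le>m. t ^ k *\<^sub>R B k))"

definition is_monic_mpoly :: "nat \<Rightarrow> (real \<Rightarrow> mat22) \<Rightarrow> bool" where
  "is_monic_mpoly n P \<longleftrightarrow> (\<exists>A :: nat \<Rightarrow> mat22. A n = mat 1 \<and> (\<forall>t. P t = (\<Sum>k\<le>n. t ^ k *\<^sub>R A k)))"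

definition monic_MOPS :: "(real \<Rightarrow> mat22) \<Rightarrow> (nat \<Rightarrow> real \<Rightarrow> mat22) \<Rightarrow> bool" where
  "monic_MOPS W P \<longleftrightarrow> (\<forall>n. is_monic_mpoly n (P n) \<and>
      (\<forall>m Q. m < n \<longrightarrow> is_mpoly m Q \<longrightarrow> mip W (P n) Q = 0))"

definition cc :: "real \<Rightarrow> real \<Rightarrow> real \<Rightarrow> nat \<Rightarrow> real" where
  "cc al be v n = (-1) ^ n * v * (kappa al v be + 2)
      / (kappa al v (-be) * pochhammer (al + be + real n + 3) n)"

definition dd :: "real \<Rightarrow> real \<Rightarrow> real \<Rightarrow> nat \<Rightarrow> real" where
  "dd al be v n = (-1) ^ (n + 1) * v * (kappa al (-v) be + 2)
      / (kappa al (-v) (-be) * pochhammer (al + be + real n + 3) n)"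

definition R2 :: "real \<Rightarrow> real \<Rightarrow> real \<Rightarrow> nat \<Rightarrow> mat22" where
  "R2 al be v n = mat2 (cc al be v n) 0 0 (dd al be v n)"

definition R1 :: "real \<Rightarrow> real \<Rightarrow> real \<Rightarrow> nat \<Rightarrow> mat22" where
  "R1 al be v n = (1 / v) *\<^sub>R mat2
     (- cc al be v n * kappa al v (-be))
     (cc al be v n * (al + be + 2 * real n + 2) * kappa al v (-be) / (kappa al v be + 2 * real n + 2))
     (- dd al be v n * (al + be + 2 * real n + 2) * kappa al (-v) (-be) / (kappa al (-v) be + 2 * real n + 2))
     (dd al be v n * kappa al (-v) (-be))"

definition R0 :: "real \<Rightarrow> real \<Rightarrow> real \<Rightarrow> nat \<Rightarrow> mat22" where
  "R0 al be v n = ((1 + real n + al) / v) *\<^sub>R mat2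
     (cc al be v n * kappa al v (-be) / (kappa al v be + 2 * real n + 2))
     (- cc al be v n * kappa al v (-be) / (kappa al v be + 2 * real n + 2))
     (dd al be v n * kappa al (-v) (-be) / (kappa al (-v) be + 2 * real n + 2))
     (- dd al be v n * kappa al (-v) (-be) / (kappa al (-v) be + 2 * real n + 2))"

definition C2 :: "real \<Rightarrow> real \<Rightarrow> real \<Rightarrow> nat \<Rightarrow> mat22" where
  "C2 al be v n = ((be + real n + 1) * (al + real n + 1)
       / ((al + be + 2 * real n + 2) * (al + be + 2 * real n + 3))) *\<^sub>R mat2
     (cc al be v n * (kappa al (-v) be + 2 * real n + 4) / (kappa al v be + 2 * real n + 2))
     0 0
     (dd al be v n * (kappa al v be + 2 * real n + 4) / (kappa al (-v) be + 2 * real n + 2))"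

definition C1 :: "real \<Rightarrow> real \<Rightarrow> real \<Rightarrow> nat \<Rightarrow> mat22" where
  "C1 al be v n = ((real n + 1) / v) *\<^sub>R mat2
     ((al - be) * (kappa al (-v) be + 2 * real n + 4) * cc al be v n
        / ((al + be + 2 * real n + 2) * (al + be + 2 * real n + 4)))
     (- cc al be v n * kappa al v (-be) / (kappa al v be + 2 * real n + 2))
     (dd al be v n * kappa al (-v) (-be) / (kappa al (-v) be + 2 * real n + 2))
     (- (al - be) * (kappa al v be + 2 * real n + 4) * dd al be v n
        / ((al + be + 2 * real n + 2) * (al + be + 2 * real n + 4)))"

definition C0 :: "real \<Rightarrow> real \<Rightarrow> real \<Rightarrow> nat \<Rightarrow> mat22" where
  "C0 al be v n = ((real n + 1) * (real n + 2)
       / ((al + be + 2 * real n + 4) * (al + be + 2 * real n + 3))) *\<^sub>R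
     mat2 (cc al be v n) 0 0 (dd al be v n)"

end

theory Submission
  imports Defs "HOL-Computational_Algebra.Polynomial"
begin

text \<open>Write \<open>\<omega>(t) = t\<^sup>\<alpha>(1 - t)\<^sup>\<beta>\<close>, so that the weight is \<open>\<omega> W\<close> with \<open>W\<close> the quadratic
  matrix polynomial of the statement. The entries of \<open>F = P\<^sub>n W\<close> are polynomials of degree \<open>n + 2\<close>
  with the top coefficients of \<open>W\<close>, orthogonal to all polynomials of degree \<open>< n\<close> for the scalar
  weight \<open>\<omega>\<close>, and \<open>F adj W\<close> is divisible by \<open>det W = c t\<^sup>2(1 - t)\<^sup>2\<close>. These properties determine
  \<open>F\<close>: the difference \<open>E\<close> of two such matrices has degree \<open>\<le> n + 1\<close> and equals \<open>S W\<close> with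
  \<open>deg S < n\<close>, so orthogonality gives \<open>\<integral> S W S\<^sup>T \<omega> = 0\<close>, while \<open>W\<close> is positive definite on
  \<open>(0, 1)\<close>. The matrix built from the \<open>R\<^sub>n\<^sub>,\<^sub>k\<close> has these properties: orthogonality is that of
  the Jacobi polynomials (the factors \<open>t\<close> and \<open>t\<^sup>2\<close> compensate the shifted parameter), and
  divisibility amounts to identities between values and derivatives at \<open>0\<close> and \<open>1\<close>. The matrix built
  from the \<open>\<C>\<^sub>n\<^sub>,\<^sub>k\<close> differs from it by \<open>t\<^sup>2(1 - t)\<^sup>2 Q\<close> with \<open>deg Q < n\<close>, and the same
  orthogonality argument shows \<open>Q = 0\<close>.\<close>

section \<open>Jacobi polynomials in the variable \<open>t = (1 - x) / 2\<close>\<close>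

definition jacobi_poly :: "nat \<Rightarrow> real \<Rightarrow> real \<Rightarrow> real poly" where
  "jacobi_poly m a b =
     (\<Sum>j\<le>m. monom (((a + real m) gchoose (m - j)) * ((-(real m + a + b + 1)) gchoose j)) j)"

lemma coeff_jacobi_poly:
  "coeff (jacobi_poly m a b) i =
     (if i \<le> m then ((a + real m) gchoose (m - i)) * ((-(real m + a + b + 1)) gchoose i) else 0)"
  unfolding jacobi_poly_def by (simp add: coeff_sum coeff_monom)

lemma poly_jacobi_poly:
  "poly (jacobi_poly m a b) t =
     (\<Sum>j\<le>m. ((a + real m) gchoose (m - j)) * ((-(real m + a + b + 1)) gchoose j) * t ^ j)"
  unfolding jacobi_poly_def by (simp add: poly_sum poly_monom)

lemma degree_jacobi_poly_le: "degree (jacobi_poly m a b) \<le> m"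
  by (rule degree_le) (simp add: coeff_jacobi_poly)

lemma jacobiP_coeff_eq_gbinomial:
  assumes "j \<le> m"
  shows "real (m choose j) * pochhammer (real j + a + 1) (m - j)
           * pochhammer (real m + a + b + 1) j * (-1) ^ j / fact m
         = ((a + real m) gchoose (m - j)) * ((-(real m + a + b + 1)) gchoose j)"
proof -
  have h1: "(a + real m) gchoose (m - j) = pochhammer (real j + a + 1) (m - j) / fact (m - j)"
    using assms by (simp add: gbinomial_pochhammer' of_nat_diff algebra_simps)
  have h2: "(-(real m + a + b + 1)) gchoose j
      = (-1) ^ j * pochhammer (real m + a + b + 1) j / fact j"
    by (subst gbinomial_pochhammer) (simp add: algebra_simps)
  have h3: "real (m choose j) = fact m / (fact j * fact (m - j))"
    using assms by (simp add: binomial_fact)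
  show ?thesis unfolding h1 h2 h3 by (simp add: field_simps)
qed

lemma poly_jacobi_poly_eq_jacobiP: "poly (jacobi_poly m a b) t = jacobiP m a b (1 - 2 * t)"
proof -
  have "jacobiP m a b (1 - 2 * t) = (\<Sum>j\<le>m. real (m choose j) * pochhammer (real j + a + 1) (m - j)
       * pochhammer (real m + a + b + 1) j * (-1) ^ j / fact m * t ^ j)"
    unfolding jacobiP_def by (simp add: sum_distrib_left field_simps)
  also have "\<dots> = poly (jacobi_poly m a b) t"
    unfolding poly_jacobi_poly by (intro sum.cong refl) (simp add: jacobiP_coeff_eq_gbinomial)
  finally show ?thesis by simp
qed

lemma pderiv_jacobi_poly:
  "pderiv (jacobi_poly (Suc m) a b) = smult (-(real m + a + b + 2)) (jacobi_poly m (a + 1) (b + 1))"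
proof (rule poly_eqI)
  fix i
  let ?c = "-(real (Suc m) + a + b + 1)"
  show "coeff (pderiv (jacobi_poly (Suc m) a b)) i
      = coeff (smult (-(real m + a + b + 2)) (jacobi_poly m (a + 1) (b + 1))) i"
  proof (cases "i \<le> m")
    case True
    have absorb: "real (Suc i) * (?c gchoose Suc i) = ?c * ((?c - 1) gchoose i)"
      by (rule gbinomial_absorption)
    have e1: "?c - 1 = -(real m + (a + 1) + (b + 1) + 1)" and e2: "a + real (Suc m) = a + 1 + real m"
      by simp_all
    have "coeff (pderiv (jacobi_poly (Suc m) a b)) i
        = ((a + real (Suc m)) gchoose (m - i)) * (real (Suc i) * (?c gchoose Suc i))"
      using True by (simp add: coeff_pderiv coeff_jacobi_poly)
    also have "\<dots> = coeff (smult (-(real m + a + b + 2)) (jacobi_poly m (a + 1) (b + 1))) i"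
      unfolding absorb e1 e2 using True by (simp add: coeff_jacobi_poly)
    finally show ?thesis .
  qed (simp add: coeff_pderiv coeff_jacobi_poly)
qed

lemma fact_poly_jacobi_poly_0: "fact m * poly (jacobi_poly m a b) 0 = pochhammer (a + 1) m"
  by (simp add: poly_jacobi_poly zero_power gbinomial_pochhammer')

lemma fact_poly_jacobi_poly_1: "fact m * poly (jacobi_poly m a b) 1 = (-1) ^ m * pochhammer (b + 1) m"
proof -
  have "poly (jacobi_poly m a b) 1
      = (\<Sum>j=0..m. ((-(real m + a + b + 1)) gchoose j) * ((a + real m) gchoose (m - j)))"
    by (simp add: poly_jacobi_poly atMost_atLeast0 mult.commute)
  also have "\<dots> = (-(real m + a + b + 1) + (a + real m)) gchoose m"
    by (rule gbinomial_Vandermonde)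
  also have "-(real m + a + b + 1) + (a + real m) = - (b + 1)"
    by simp
  finally show ?thesis by (simp add: gbinomial_pochhammer add.commute)
qed

lemma fact_poly_pderiv_jacobi_poly_0:
  "(a + 1) * (fact m * poly (pderiv (jacobi_poly m a b)) 0)
     = - (real m + a + b + 1) * real m * pochhammer (a + 1) m"
proof (cases m)
  case (Suc k)
  have "fact m * poly (pderiv (jacobi_poly m a b)) 0
      = - (real k + a + b + 2) * real m * (fact k * poly (jacobi_poly k (a + 1) (b + 1)) 0)"
    unfolding Suc pderiv_jacobi_poly by (simp add: algebra_simps)
  also have "fact k * poly (jacobi_poly k (a + 1) (b + 1)) 0 = pochhammer (a + 2) k"
    using fact_poly_jacobi_poly_0[of k "a + 1"] by (simp add: add.assoc)
  finally have D: "fact m * poly (pderiv (jacobi_poly m a b)) 0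
      = - (real k + a + b + 2) * real m * pochhammer (a + 2) k" .
  have P: "pochhammer (a + 1) m = (a + 1) * pochhammer (a + 2) k"
    unfolding Suc pochhammer_rec by (simp add: add.assoc)
  show ?thesis
    unfolding D P using Suc by (simp add: algebra_simps)
qed (simp add: jacobi_poly_def)

lemma fact_poly_pderiv_jacobi_poly_1:
  "(b + 1) * (fact m * poly (pderiv (jacobi_poly m a b)) 1)
     = (real m + a + b + 1) * real m * ((-1) ^ m * pochhammer (b + 1) m)"
proof (cases m)
  case (Suc k)
  have "fact m * poly (pderiv (jacobi_poly m a b)) 1
      = - (real k + a + b + 2) * real m * (fact k * poly (jacobi_poly k (a + 1) (b + 1)) 1)"
    unfolding Suc pderiv_jacobi_poly by (simp add: algebra_simps)
  also have "fact k * poly (jacobi_poly k (a + 1) (b + 1)) 1 = (-1) ^ k * pochhammer (b + 2) k"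
    using fact_poly_jacobi_poly_1[of k "a + 1" "b + 1"] by (simp add: add.assoc)
  finally have D: "fact m * poly (pderiv (jacobi_poly m a b)) 1
      = - (real k + a + b + 2) * real m * ((-1) ^ k * pochhammer (b + 2) k)" .
  have P: "(-1) ^ m * pochhammer (b + 1) m = - (b + 1) * ((-1) ^ k * pochhammer (b + 2) k)"
    unfolding Suc pochhammer_rec by (simp add: add.assoc) (simp add: algebra_simps)
  show ?thesis
    unfolding D P using Suc by (simp add: algebra_simps)
qed (simp add: jacobi_poly_def)

section \<open>Orthogonality for the weight \<open>t\<^sup>a(1 - t)\<^sup>b\<close>\<close>

lemma degree_diff_shift_less:
  fixes q :: "real poly"
  shows "q - pcompose q [:1, 1:] = 0 \<or> degree (q - pcompose q [:1, 1:]) < degree q"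
proof (cases "degree q = 0")
  case True
  then obtain c where "q = [:c:]" by (metis degree0_coeffs)
  then show ?thesis by simp
next
  case False
  have deg: "degree (pcompose q [:1, 1:]) = degree q"
    by (simp add: degree_pcompose)
  moreover have "lead_coeff (pcompose q [:1, 1:]) = lead_coeff q"
    by (simp add: lead_coeff_comp)
  ultimately have "coeff (q - pcompose q [:1, 1:]) (degree q) = 0"
    by simp
  moreover have "degree (q - pcompose q [:1, 1:]) \<le> degree q"
    using degree_diff_le[of q "degree q" "pcompose q [:1, 1:]"] deg by simp
  ultimately show ?thesis
    by (metis le_neq_implies_less leading_coeff_0_iff)
qed

lemma finite_difference_poly_eq_0:
  fixes q :: "real poly"
  assumes "degree q < m"
  shows "(\<Sum>j\<le>m. (-1) ^ j * real (m choose j) * poly q (real j)) = 0"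
  using assms
proof (induction m arbitrary: q)
  case (Suc m)
  define d where "d = q - pcompose q [:1, 1:]"
  let ?f = "\<lambda>j. (-1) ^ j * real (m choose j) * poly q (real j)"
  let ?g = "\<lambda>j. (-1) ^ Suc j * real (m choose j) * poly q (real (Suc j))"
  have "(\<Sum>j\<le>Suc m. (-1) ^ j * real (Suc m choose j) * poly q (real j))
      = poly q 0 + (\<Sum>j\<le>m. ?g j + (-1) ^ Suc j * real (m choose Suc j) * poly q (real (Suc j)))"
    by (subst sum.atMost_Suc_shift) (simp add: algebra_simps)
  also have "\<dots> = (poly q 0 + (\<Sum>j\<le>m. (-1) ^ Suc j * real (m choose Suc j) * poly q (real (Suc j))))
      + (\<Sum>j\<le>m. ?g j)"
    by (simp only: sum.distrib ac_simps)
  also have "poly q 0 + (\<Sum>j\<le>m. (-1) ^ Suc j * real (m choose Suc j) * poly q (real (Suc j)))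
      = (\<Sum>j\<le>m. ?f j)"
    using sum.atMost_Suc_shift[of ?f m] by (simp add: binomial_eq_0)
  also have "(\<Sum>j\<le>m. ?f j) + (\<Sum>j\<le>m. ?g j)
      = (\<Sum>j\<le>m. (-1) ^ j * real (m choose j) * poly d (real j))"
    by (simp add: d_def poly_pcompose sum.distrib[symmetric] algebra_simps)
  finally have step: "(\<Sum>j\<le>Suc m. (-1) ^ j * real (Suc m choose j) * poly q (real j))
      = (\<Sum>j\<le>m. (-1) ^ j * real (m choose j) * poly d (real j))" .
  show ?case
  proof (cases "d = 0")
    case True
    then show ?thesis
      unfolding step by simp
  next
    case False
    then have "degree d < m"
      using degree_diff_shift_less[of q] Suc.prems by (simp add: d_def)
    then show ?thesis
      unfolding step by (rule Suc.IH)
  qed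
qed simp

definition pochhammer_poly :: "real \<Rightarrow> nat \<Rightarrow> real poly" where
  "pochhammer_poly c r = (\<Prod>i<r. [:c + real i, 1:])"

lemma poly_pochhammer_poly: "poly (pochhammer_poly c r) x = pochhammer (c + x) r"
  by (simp add: pochhammer_poly_def poly_prod pochhammer_prod atLeast0LessThan algebra_simps)

lemma pochhammer_poly_neq_0: "pochhammer_poly c r \<noteq> 0"
  unfolding pochhammer_poly_def by (subst prod_zero_iff) auto

lemma degree_pochhammer_poly: "degree (pochhammer_poly c r) = r"
  unfolding pochhammer_poly_def by (subst degree_prod_eq_sum_degree) auto

text \<open>\<open>moment_ratio a b i\<close> is the \<open>i\<close>-th moment of \<open>t\<^sup>a(1 - t)\<^sup>b\<close> on \<open>[0, 1]\<close> divided by its total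
  mass.\<close>

definition moment_ratio :: "real \<Rightarrow> real \<Rightarrow> nat \<Rightarrow> real" where
  "moment_ratio a b i = pochhammer (a + 1) i / pochhammer (a + b + 2) i"

text \<open>The \<open>j\<close>-th term is \<open>(-1)\<^sup>j (m choose j) Q(j)\<close> up to a constant, where \<open>Q\<close> is a product of two
  rising factorials of total degree \<open>m - 1\<close>; so the sum is an \<open>m\<close>-th finite difference of \<open>Q\<close>.\<close>

lemma jacobi_poly_moment_sum_eq_0:
  assumes a: "a > -1" and b: "b > -1" and k: "k < m"
  shows "(\<Sum>j\<le>m. coeff (jacobi_poly m a b) j * moment_ratio a b (j + k)) = 0"
proof -
  define Q where "Q = pochhammer_poly (a + 1) k * pochhammer_poly (a + b + 2 + real k) (m - 1 - k)"
  have deg_Q: "degree Q < m"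
    using k unfolding Q_def
    by (subst degree_mult_eq) (auto simp: degree_pochhammer_poly pochhammer_poly_neq_0)
  have poly_Q: "poly Q x = pochhammer (a + 1 + x) k * pochhammer (a + b + 2 + real k + x) (m - 1 - k)"
    for x
    by (simp add: Q_def poly_pochhammer_poly)
  define K where "K = pochhammer (a + 1) m / (fact m * pochhammer (a + b + 2) (m - 1))"
  have ab: "a + b + 2 > 0" using a b by simp
  have summand: "coeff (jacobi_poly m a b) j * moment_ratio a b (j + k)
      = K * ((-1) ^ j * real (m choose j) * poly Q (real j))" if j: "j \<le> m" for j
  proof -
    have c: "coeff (jacobi_poly m a b) j = real (m choose j) * pochhammer (real j + a + 1) (m - j)
        * pochhammer (real m + a + b + 1) j * (-1) ^ j / fact m"
      using j by (simp add: coeff_jacobi_poly jacobiP_coeff_eq_gbinomial)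
    have p1: "pochhammer (a + 1) m = pochhammer (a + 1) j * pochhammer (real j + a + 1) (m - j)"
      using pochhammer_product'[of "a + 1" j "m - j"] j by (simp add: algebra_simps)
    have p2: "pochhammer (a + 1) (j + k) = pochhammer (a + 1) j * pochhammer (a + 1 + real j) k"
      using pochhammer_product'[of "a + 1" j k] by (simp add: algebra_simps)
    have p3: "pochhammer (a + b + 2) (j + k + (m - 1 - k))
        = pochhammer (a + b + 2) (j + k) * pochhammer (a + b + 2 + real k + real j) (m - 1 - k)"
      using pochhammer_product'[of "a + b + 2" "j + k" "m - 1 - k"] by (simp add: algebra_simps)
    have p4: "pochhammer (a + b + 2) ((m - 1) + j)
        = pochhammer (a + b + 2) (m - 1) * pochhammer (real m + a + b + 1) j"
      using pochhammer_product'[of "a + b + 2" "m - 1" j] k by (simp add: algebra_simps of_nat_diff)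
    have e: "j + k + (m - 1 - k) = (m - 1) + j" using k by simp
    have n1: "pochhammer (a + b + 2) (j + k) \<noteq> 0" "pochhammer (a + b + 2) (m - 1) \<noteq> 0"
      using pochhammer_pos[OF ab] by (auto simp: less_le)
    have n2: "pochhammer (a + 1) j \<noteq> 0"
      using pochhammer_pos[of "a + 1" j] a by auto
    have q: "pochhammer (real m + a + b + 1) j = pochhammer (a + b + 2) (j + k)
        * pochhammer (a + b + 2 + real k + real j) (m - 1 - k) / pochhammer (a + b + 2) (m - 1)"
      using p3 p4 e n1 by (simp add: field_simps)
    have r: "pochhammer (real j + a + 1) (m - j) = pochhammer (a + 1) m / pochhammer (a + 1) j"
      using p1 n2 by (simp add: field_simps)
    show ?thesis
      unfolding c moment_ratio_def K_def poly_Q q r p2 using n1 n2 by (simp add: field_simps)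
  qed
  have "(\<Sum>j\<le>m. coeff (jacobi_poly m a b) j * moment_ratio a b (j + k))
      = K * (\<Sum>j\<le>m. (-1) ^ j * real (m choose j) * poly Q (real j))"
    by (simp add: summand sum_distrib_left)
  also have "\<dots> = 0"
    using finite_difference_poly_eq_0[OF deg_Q] by simp
  finally show ?thesis .
qed

definition jacobi_weight :: "real \<Rightarrow> real \<Rightarrow> real \<Rightarrow> real" where
  "jacobi_weight a b t = t powr a * (1 - t) powr b"

definition jacobi_orthogonal :: "real \<Rightarrow> real \<Rightarrow> nat \<Rightarrow> real poly \<Rightarrow> bool" where
  "jacobi_orthogonal a b n p \<longleftrightarrow>
     (\<forall>k<n. ((\<lambda>t. poly p t * t ^ k * jacobi_weight a b t) has_integral 0) {0..1})"

lemma Beta_shift_moment_ratio: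
  assumes a: "a > -1" and b: "b > -1"
  shows "Beta (a + 1 + real i) (b + 1) = Beta (a + 1) (b + 1) * moment_ratio a b i"
proof (induction i)
  case (Suc i)
  define x where "x = a + 1 + real i"
  have x: "x > 0" using a by (simp add: x_def)
  then have "x \<notin> \<int>\<^sub>\<le>\<^sub>0"
    using nonpos_Ints_nonpos by fastforce
  then have rec: "(x + (b + 1)) * Beta (x + 1) (b + 1) = x * Beta x (b + 1)"
    by (rule Beta_plus1_left)
  have "x + (b + 1) > 0" using x b by simp
  have ratio: "moment_ratio a b (Suc i) = moment_ratio a b i * x / (x + (b + 1))"
    by (simp add: moment_ratio_def pochhammer_Suc x_def algebra_simps)
  have IH: "Beta x (b + 1) = Beta (a + 1) (b + 1) * moment_ratio a b i"
    using Suc by (simp add: x_def)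
  have "Beta (a + 1 + real (Suc i)) (b + 1) = Beta (x + 1) (b + 1)"
    by (simp add: x_def)
  also have "\<dots> = x * Beta x (b + 1) / (x + (b + 1))"
    using rec \<open>x + (b + 1) > 0\<close> by (simp add: field_simps)
  also have "\<dots> = Beta (a + 1) (b + 1) * moment_ratio a b (Suc i)"
    unfolding IH ratio by simp
  finally show ?case .
qed (simp add: moment_ratio_def)

lemma has_integral_power_jacobi_weight:
  assumes a: "a > -1" and b: "b > -1"
  shows "((\<lambda>t. t ^ i * jacobi_weight a b t) has_integral (Beta (a + 1) (b + 1) * moment_ratio a b i))
    {0..1}"
proof -
  have "((\<lambda>t. t powr (a + 1 + real i - 1) * (1 - t) powr (b + 1 - 1))
      has_integral Beta (a + 1) (b + 1) * moment_ratio a b i) {0..1}"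
    using has_integral_Beta_real[of "a + 1 + real i" "b + 1"] a b
    by (simp add: Beta_shift_moment_ratio[OF a b])
  then show ?thesis
  proof (rule has_integral_eq[rotated])
    fix t :: real assume t: "t \<in> {0..1}"
    show "t powr (a + 1 + real i - 1) * (1 - t) powr (b + 1 - 1) = t ^ i * jacobi_weight a b t"
    proof (cases "t = 0")
      case False
      then have "t > 0" using t by simp
      then show ?thesis by (simp add: jacobi_weight_def powr_add powr_realpow algebra_simps)
    qed (simp add: jacobi_weight_def)
  qed
qed

lemma has_integral_poly_jacobi_weight:
  assumes a: "a > -1" and b: "b > -1" and N: "degree q \<le> N"
  shows "((\<lambda>t. poly q t * jacobi_weight a b t)
    has_integral (Beta (a + 1) (b + 1) * (\<Sum>i\<le>N. coeff q i * moment_ratio a b i))) {0..1}"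
proof -
  have "((\<lambda>t. \<Sum>i\<le>N. coeff q i * (t ^ i * jacobi_weight a b t))
      has_integral (\<Sum>i\<le>N. coeff q i * (Beta (a + 1) (b + 1) * moment_ratio a b i))) {0..1}"
    by (intro has_integral_sum has_integral_mult_right has_integral_power_jacobi_weight a b) auto
  moreover have "poly q t = (\<Sum>i\<le>N. coeff q i * t ^ i)" for t
    unfolding poly_altdef using N by (intro sum.mono_neutral_left) (auto simp: coeff_eq_0)
  ultimately show ?thesis
    by (simp add: sum_distrib_left sum_distrib_right algebra_simps)
qed

lemma jacobi_orthogonal_jacobi_poly:
  assumes a: "a > -1" and b: "b > -1"
  shows "jacobi_orthogonal a b m (jacobi_poly m a b)"
  unfolding jacobi_orthogonal_def
proof (intro allI impI)
  fix k assume k: "k < m"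
  let ?c = "coeff (jacobi_poly m a b)"
  have "((\<lambda>t. \<Sum>j\<le>m. ?c j * (t ^ (j + k) * jacobi_weight a b t))
      has_integral (\<Sum>j\<le>m. ?c j * (Beta (a + 1) (b + 1) * moment_ratio a b (j + k)))) {0..1}"
    by (intro has_integral_sum has_integral_mult_right has_integral_power_jacobi_weight a b) auto
  moreover have "(\<Sum>j\<le>m. ?c j * (Beta (a + 1) (b + 1) * moment_ratio a b (j + k)))
      = Beta (a + 1) (b + 1) * (\<Sum>j\<le>m. ?c j * moment_ratio a b (j + k))"
    by (simp add: sum_distrib_left mult_ac)
  moreover have "(\<Sum>j\<le>m. ?c j * (t ^ (j + k) * jacobi_weight a b t))
      = poly (jacobi_poly m a b) t * t ^ k * jacobi_weight a b t" for t
    by (simp add: poly_jacobi_poly coeff_jacobi_poly power_add sum_distrib_left mult_ac)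
  ultimately show "((\<lambda>t. poly (jacobi_poly m a b) t * t ^ k * jacobi_weight a b t) has_integral 0) {0..1}"
    using jacobi_poly_moment_sum_eq_0[OF a b k] by simp
qed

lemma jacobi_orthogonal_mono:
  "jacobi_orthogonal a b n p \<Longrightarrow> m \<le> n \<Longrightarrow> jacobi_orthogonal a b m p"
  unfolding jacobi_orthogonal_def by auto

lemma jacobi_orthogonal_add:
  assumes "jacobi_orthogonal a b n p" "jacobi_orthogonal a b n q"
  shows "jacobi_orthogonal a b n (p + q)"
  unfolding jacobi_orthogonal_def
proof (intro allI impI)
  fix k assume "k < n"
  then have "((\<lambda>t. poly p t * t ^ k * jacobi_weight a b t + poly q t * t ^ k * jacobi_weight a b t)
      has_integral 0 + 0) {0..1}"
    using assms unfolding jacobi_orthogonal_def by (intro has_integral_add) auto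
  then show "((\<lambda>t. poly (p + q) t * t ^ k * jacobi_weight a b t) has_integral 0) {0..1}"
    by (simp add: distrib_right)
qed

lemma jacobi_orthogonal_smult:
  assumes "jacobi_orthogonal a b n p"
  shows "jacobi_orthogonal a b n (smult c p)"
  unfolding jacobi_orthogonal_def
proof (intro allI impI)
  fix k assume "k < n"
  then have "((\<lambda>t. c * (poly p t * t ^ k * jacobi_weight a b t)) has_integral c * 0) {0..1}"
    using assms unfolding jacobi_orthogonal_def by (intro has_integral_mult_right) auto
  then show "((\<lambda>t. poly (smult c p) t * t ^ k * jacobi_weight a b t) has_integral 0) {0..1}"
    by (simp add: mult.assoc)
qed

lemma jacobi_orthogonal_diff:
  "jacobi_orthogonal a b n p \<Longrightarrow> jacobi_orthogonal a b n q \<Longrightarrow> jacobi_orthogonal a b n (p - q)"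
  using jacobi_orthogonal_add[of a b n p "smult (-1) q"] jacobi_orthogonal_smult[of a b n q "-1"]
  by simp

lemma jacobi_weight_shift: "0 \<le> t \<Longrightarrow> t * jacobi_weight a b t = jacobi_weight (a + 1) b t"
  by (cases "t = 0") (simp_all add: jacobi_weight_def powr_add)

lemma jacobi_orthogonal_shift:
  assumes "jacobi_orthogonal (a + 1) b n p"
  shows "jacobi_orthogonal a b n ([:0, 1:] * p)"
  unfolding jacobi_orthogonal_def
proof (intro allI impI)
  fix k assume "k < n"
  then have "((\<lambda>t. poly p t * t ^ k * jacobi_weight (a + 1) b t) has_integral 0) {0..1}"
    using assms unfolding jacobi_orthogonal_def by blast
  then show "((\<lambda>t. poly ([:0, 1:] * p) t * t ^ k * jacobi_weight a b t) has_integral 0) {0..1}"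
    by (rule has_integral_eq[rotated]) (simp add: jacobi_weight_shift[symmetric] mult_ac)
qed

lemma has_integral_jacobi_orthogonal:
  assumes "jacobi_orthogonal a b n p" and "q = 0 \<or> degree q < n"
  shows "((\<lambda>t. poly p t * poly q t * jacobi_weight a b t) has_integral 0) {0..1}"
proof -
  have "poly q t = (\<Sum>k<n. coeff q k * t ^ k)" for t
  proof (cases "q = 0")
    case False
    then show ?thesis
      using assms(2) unfolding poly_altdef by (intro sum.mono_neutral_left) (auto simp: coeff_eq_0)
  qed simp
  then have "poly p t * poly q t * jacobi_weight a b t
      = (\<Sum>k<n. coeff q k * (poly p t * t ^ k * jacobi_weight a b t))" for t
    by (simp add: sum_distrib_left sum_distrib_right mult_ac)
  moreover have "((\<lambda>t. \<Sum>k<n. coeff q k * (poly p t * t ^ k * jacobi_weight a b t))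
      has_integral (\<Sum>k<n. coeff q k * 0)) {0..1}"
    using assms(1) unfolding jacobi_orthogonal_def
    by (intro has_integral_sum has_integral_mult_right) auto
  ultimately show ?thesis by simp
qed

lemma poly_eq_0_if_roots_interval:
  fixes p :: "real poly"
  assumes "a < b" and "\<And>t. a < t \<Longrightarrow> t < b \<Longrightarrow> poly p t = 0"
  shows "p = 0"
proof (rule ccontr)
  assume "p \<noteq> 0"
  then have "finite {t. poly p t = 0}" by (rule poly_roots_finite)
  moreover have "{a<..<b} \<subseteq> {t. poly p t = 0}" using assms(2) by auto
  ultimately show False
    using infinite_Ioo[OF assms(1)] finite_subset by blast
qed

lemma poly_eq_0_if_nonneg_integral_eq_0:
  fixes p :: "real poly"
  assumes nonneg: "\<And>t. 0 < t \<Longrightarrow> t < 1 \<Longrightarrow> poly p t \<ge> 0"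
    and int0: "((\<lambda>t. poly p t * jacobi_weight a b t) has_integral 0) {0..1}"
  shows "p = 0"
proof -
  define f where "f t = poly p t * jacobi_weight a b t" for t
  have f_nonneg: "\<forall>t\<in>{0..1}. 0 \<le> f t"
  proof
    fix t :: real assume "t \<in> {0..1}"
    then consider "t = 0 \<or> t = 1" | "0 < t" "t < 1" by fastforce
    then show "0 \<le> f t"
    proof cases
      case 1
      then show ?thesis by (auto simp: f_def jacobi_weight_def)
    next
      case 2
      then show ?thesis by (simp add: f_def jacobi_weight_def nonneg)
    qed
  qed
  \<comment> \<open>\<open>f\<close> may be unbounded near \<open>0\<close> and \<open>1\<close>, so continuity is only used on a smaller interval.\<close>
  have cont: "continuous_on {1/4..3/4} f"
    unfolding f_def jacobi_weight_def by (intro continuous_intros) auto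
  then obtain I where I: "(f has_integral I) {1/4..3/4}"
    using integrable_continuous_interval by blast
  have "I \<le> 0"
    using has_integral_subset_le[OF _ I int0[folded f_def] f_nonneg] by auto
  moreover have "I \<ge> 0"
    using f_nonneg by (intro has_integral_nonneg[OF I]) auto
  ultimately have I0: "(f has_integral 0) (cbox (1/4) (3/4))"
    using I by simp
  show ?thesis
  proof (rule poly_eq_0_if_roots_interval[of "1/4" "3/4"])
    fix t :: real assume t: "1/4 < t" "t < 3/4"
    have "f t = 0"
      using cont f_nonneg t
      by (intro has_integral_0_cbox_imp_0[OF _ _ I0, of t]) (auto simp: box_real)
    moreover have "jacobi_weight a b t > 0"
      using t by (simp add: jacobi_weight_def)
    ultimately show "poly p t = 0" by (simp add: f_def)
  qed simp
qed

section \<open>Polynomials with double roots at \<open>0\<close> and \<open>1\<close>\<close>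

definition endpoint_poly :: "real poly" where
  "endpoint_poly = [:0, 0, 1:] * [:1, -1:] ^ 2"

lemma poly_endpoint_poly: "poly endpoint_poly t = t^2 * (1 - t)^2"
  by (simp add: endpoint_poly_def power2_eq_square algebra_simps)

lemma endpoint_poly_neq_0: "endpoint_poly \<noteq> 0"
  by (simp add: endpoint_poly_def)

lemma degree_endpoint_poly: "degree endpoint_poly = 4"
  by (simp add: endpoint_poly_def degree_mult_eq degree_power_eq)

lemma degree_endpoint_poly_quotient:
  assumes "degree (endpoint_poly * s) \<le> n + 3"
  shows "s = 0 \<or> degree s < n"
  using assms by (cases "s = 0") (simp_all add: degree_mult_eq endpoint_poly_neq_0 degree_endpoint_poly)

lemma double_root_dvd:
  fixes h :: "real poly"
  assumes "poly h c = 0" "poly (pderiv h) c = 0"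
  obtains r where "h = [:-c, 1:] ^ 2 * r"
proof -
  obtain q where q: "h = [:-c, 1:] * q"
    using assms(1) by (metis dvdE poly_eq_0_iff_dvd)
  have "poly q c = 0"
    using assms(2) unfolding q pderiv_mult poly_add poly_mult by (simp add: pderiv_pCons)
  then obtain r where "q = [:-c, 1:] * r"
    by (metis dvdE poly_eq_0_iff_dvd)
  then have "h = [:-c, 1:] ^ 2 * r"
    unfolding q power2_eq_square by (simp only: mult.assoc)
  then show ?thesis by (rule that)
qed

lemma endpoint_poly_dvd:
  fixes h :: "real poly"
  assumes "poly h 0 = 0" "poly (pderiv h) 0 = 0" "poly h 1 = 0" "poly (pderiv h) 1 = 0"
  shows "endpoint_poly dvd h"
proof -
  obtain q where q: "h = [:0, 1:] ^ 2 * q"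
    using double_root_dvd[OF assms(1,2)] by auto
  have "poly (pderiv ([:0, 1:] ^ 2)) 1 = (2::real)"
    by (simp add: pderiv_power_Suc numeral_2_eq_2 pderiv_pCons)
  then have "poly q 1 = 0" "poly (pderiv q) 1 = 0"
    using assms(3,4) unfolding q pderiv_mult poly_add poly_mult by simp_all
  then obtain r where "q = [:-1, 1:] ^ 2 * r"
    by (rule double_root_dvd)
  moreover have "endpoint_poly = [:0, 1:] ^ 2 * [:-1, 1:] ^ 2"
    by (simp add: endpoint_poly_def power2_eq_square algebra_simps)
  ultimately show ?thesis
    using q by (metis dvd_triv_left mult.assoc)
qed

section \<open>The two combinations of Jacobi polynomials\<close>

definition shifted_jacobi_comb :: "nat \<Rightarrow> real \<Rightarrow> real \<Rightarrow> real \<Rightarrow> real \<Rightarrow> real \<Rightarrow> real poly" where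
  "shifted_jacobi_comb n a b r2 r1 r0 = smult (fact n)
     (smult r2 ([:0, 0, 1:] * jacobi_poly n (a + 2) b) + smult r1 ([:0, 1:] * jacobi_poly n (a + 1) b)
      + smult r0 (jacobi_poly n a b))"

definition consecutive_jacobi_comb :: "nat \<Rightarrow> real \<Rightarrow> real \<Rightarrow> real \<Rightarrow> real \<Rightarrow> real \<Rightarrow> real poly" where
  "consecutive_jacobi_comb n a b c2 c1 c0 = smult (fact n)
     (smult c2 (jacobi_poly n a b) + smult c1 (jacobi_poly (n + 1) a b)
      + smult c0 (jacobi_poly (n + 2) a b))"

lemma degree_shifted_jacobi_comb: "degree (shifted_jacobi_comb n a b r2 r1 r0) \<le> n + 2"
proof -
  have "degree ([:0, 0, 1:] * jacobi_poly n (a + 2) b) \<le> n + 2"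
    using degree_jacobi_poly_le[of n "a + 2" b] by (intro order.trans[OF degree_mult_le]) simp
  moreover have "degree ([:0, 1:] * jacobi_poly n (a + 1) b) \<le> n + 2"
    using degree_jacobi_poly_le[of n "a + 1" b] by (intro order.trans[OF degree_mult_le]) simp
  ultimately
  show ?thesis
    unfolding shifted_jacobi_comb_def using degree_jacobi_poly_le[of n a b]
    by (intro order.trans[OF degree_smult_le] degree_add_le order.trans[OF degree_smult_le]) auto
qed

lemma degree_consecutive_jacobi_comb: "degree (consecutive_jacobi_comb n a b c2 c1 c0) \<le> n + 2"
  unfolding consecutive_jacobi_comb_def
  by (intro order.trans[OF degree_smult_le] degree_add_le order.trans[OF degree_smult_le])
     (auto intro: order.trans[OF degree_jacobi_poly_le])

lemma coeff_shifted_jacobi_comb_top: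
  "coeff (shifted_jacobi_comb n a b r2 r1 r0) (n + 2)
     = fact n * r2 * ((-(real n + a + b + 3)) gchoose n)"
  by (simp add: shifted_jacobi_comb_def coeff_jacobi_poly numeral_2_eq_2 algebra_simps)

lemma jacobi_orthogonal_shifted_jacobi_comb:
  assumes "a > -1" "b > -1"
  shows "jacobi_orthogonal a b n (shifted_jacobi_comb n a b r2 r1 r0)"
proof -
  have "jacobi_orthogonal a b n ([:0, 1:] * ([:0, 1:] * jacobi_poly n (a + 2) b))"
    using assms jacobi_orthogonal_jacobi_poly[of "a + 2" b n]
    by (intro jacobi_orthogonal_shift) (simp add: add.assoc)
  moreover have "jacobi_orthogonal a b n ([:0, 1:] * jacobi_poly n (a + 1) b)"
    using assms by (intro jacobi_orthogonal_shift jacobi_orthogonal_jacobi_poly) auto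
  ultimately show ?thesis
    unfolding shifted_jacobi_comb_def using assms
    by (intro jacobi_orthogonal_smult jacobi_orthogonal_add jacobi_orthogonal_jacobi_poly)
       (simp_all add: mult_pCons_left)
qed

lemma jacobi_orthogonal_consecutive_jacobi_comb:
  assumes "a > -1" "b > -1"
  shows "jacobi_orthogonal a b n (consecutive_jacobi_comb n a b c2 c1 c0)"
  unfolding consecutive_jacobi_comb_def using assms
  by (intro jacobi_orthogonal_smult jacobi_orthogonal_add
      jacobi_orthogonal_mono[OF jacobi_orthogonal_jacobi_poly]) auto

context
  fixes a b :: real and n :: nat
  assumes a: "a + 1 \<noteq> 0" and b: "b + 1 \<noteq> 0"
begin

lemma shifted_jacobi_comb_jets:
  defines "P0 \<equiv> pochhammer (a + 1) n" and "P1 \<equiv> (-1) ^ n * pochhammer (b + 1) n"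
  shows "poly (shifted_jacobi_comb n a b r2 r1 r0) 0 = P0 * r0"
    and "poly (pderiv (shifted_jacobi_comb n a b r2 r1 r0)) 0
      = P0 * (r1 * (a + 1 + real n) - r0 * (real n + a + b + 1) * real n) / (a + 1)"
    and "poly (shifted_jacobi_comb n a b r2 r1 r0) 1 = P1 * (r2 + r1 + r0)"
    and "poly (pderiv (shifted_jacobi_comb n a b r2 r1 r0)) 1
      = P1 * (r2 * (2 * (b + 1) + (real n + a + b + 3) * real n)
          + r1 * (b + 1 + (real n + a + b + 2) * real n)
          + r0 * (real n + a + b + 1) * real n) / (b + 1)"
      (is "_ = ?D1")
proof -
  let ?S = "shifted_jacobi_comb n a b r2 r1 r0"
  let ?J = "\<lambda>c. jacobi_poly n c b"
  have J0: "fact n * poly (?J a) 0 = P0"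
    "(a + 1) * (fact n * poly (?J (a + 1)) 0) = P0 * (a + 1 + real n)"
    "(a + 1) * (fact n * poly (pderiv (?J a)) 0) = - (real n + a + b + 1) * real n * P0"
    using fact_poly_jacobi_poly_0[of n "a + 1" b] fact_poly_pderiv_jacobi_poly_0[of a n b]
      pochhammer_rec[of "a + 1" n] pochhammer_Suc[of "a + 1" n]
    by (simp_all add: P0_def fact_poly_jacobi_poly_0 add.assoc)
  have J1: "fact n * poly (?J c) 1 = P1"
    "(b + 1) * (fact n * poly (pderiv (?J c)) 1) = (real n + c + b + 1) * real n * P1" for c
    using fact_poly_jacobi_poly_1[of n c b] fact_poly_pderiv_jacobi_poly_1[of b n c]
    by (simp_all add: P1_def)
  note defs = shifted_jacobi_comb_def pderiv_add pderiv_smult pderiv_mult pderiv_pCons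
  show "poly ?S 0 = P0 * r0"
    using J0 by (simp add: shifted_jacobi_comb_def algebra_simps)
  show "poly ?S 1 = P1 * (r2 + r1 + r0)"
    using J1 by (simp add: shifted_jacobi_comb_def algebra_simps)
  have "(a + 1) * poly (pderiv ?S) 0
      = r1 * ((a + 1) * (fact n * poly (?J (a + 1)) 0))
        + r0 * ((a + 1) * (fact n * poly (pderiv (?J a)) 0))"
    by (simp add: defs algebra_simps)
  then show "poly (pderiv ?S) 0
      = P0 * (r1 * (a + 1 + real n) - r0 * (real n + a + b + 1) * real n) / (a + 1)"
    unfolding J0 using a by (simp add: eq_divide_eq algebra_simps)
  have "(b + 1) * poly (pderiv ?S) 1
      = r2 * (2 * (b + 1) * (fact n * poly (?J (a + 2)) 1)
          + (b + 1) * (fact n * poly (pderiv (?J (a + 2))) 1))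
        + r1 * ((b + 1) * (fact n * poly (?J (a + 1)) 1)
          + (b + 1) * (fact n * poly (pderiv (?J (a + 1))) 1))
        + r0 * ((b + 1) * (fact n * poly (pderiv (?J a)) 1))"
    by (simp add: defs algebra_simps)
  then show "poly (pderiv ?S) 1 = ?D1"
    unfolding J1 using b by (simp add: eq_divide_eq algebra_simps)
qed

lemma consecutive_jacobi_comb_jets:
  defines "P0 \<equiv> pochhammer (a + 1) n" and "P1 \<equiv> (-1) ^ n * pochhammer (b + 1) n"
  shows "poly (consecutive_jacobi_comb n a b c2 c1 c0) 0
      = P0 * (c2 * (real n + 1) * (real n + 2) + c1 * (a + 1 + real n) * (real n + 2)
          + c0 * (a + 1 + real n) * (a + 2 + real n)) / ((real n + 1) * (real n + 2))"
      (is "_ = ?N0 / _")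
    and "poly (pderiv (consecutive_jacobi_comb n a b c2 c1 c0)) 0
      = - P0 * (c2 * (real n + a + b + 1) * real n * (real n + 1)
          + c1 * (a + 1 + real n) * (real n + a + b + 2) * (real n + 1)
          + c0 * (a + 1 + real n) * (a + 2 + real n) * (real n + a + b + 3))
        / ((a + 1) * (real n + 1))"
      (is "_ = ?M0 / _")
    and "poly (consecutive_jacobi_comb n a b c2 c1 c0) 1
      = P1 * (c2 * (real n + 1) * (real n + 2) - c1 * (b + 1 + real n) * (real n + 2)
          + c0 * (b + 1 + real n) * (b + 2 + real n)) / ((real n + 1) * (real n + 2))"
      (is "_ = ?N1 / _")
    and "poly (pderiv (consecutive_jacobi_comb n a b c2 c1 c0)) 1
      = P1 * (c2 * (real n + a + b + 1) * real n * (real n + 1)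
          - c1 * (b + 1 + real n) * (real n + a + b + 2) * (real n + 1)
          + c0 * (b + 1 + real n) * (b + 2 + real n) * (real n + a + b + 3))
        / ((b + 1) * (real n + 1))"
      (is "_ = ?M1 / _")
proof -
  let ?C = "consecutive_jacobi_comb n a b c2 c1 c0"
  let ?J = "\<lambda>m. jacobi_poly m a b"
  have fact: "fact (n + 1) = (real n + 1) * fact n"
    "fact (n + 2) = (real n + 1) * (real n + 2) * fact n"
    by (simp_all add: numeral_2_eq_2 algebra_simps)
  have poch: "pochhammer x (n + 1) = pochhammer x n * (x + real n)"
    "pochhammer x (n + 2) = pochhammer x n * (x + real n) * (x + real n + 1)" for x :: real
    by (simp_all add: numeral_2_eq_2 pochhammer_Suc algebra_simps)
  have nz: "(real n + 1) * (real n + 2) \<noteq> 0" "(a + 1) * (real n + 1) \<noteq> 0"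
    "(b + 1) * (real n + 1) \<noteq> 0"
    using a b by simp_all
  note defs = consecutive_jacobi_comb_def pderiv_add pderiv_smult
  have "(real n + 1) * (real n + 2) * poly ?C 0
      = c2 * (real n + 1) * (real n + 2) * (fact n * poly (?J n) 0)
        + c1 * (real n + 2) * (fact (n + 1) * poly (?J (n + 1)) 0)
        + c0 * (fact (n + 2) * poly (?J (n + 2)) 0)"
    unfolding fact by (simp add: defs algebra_simps)
  also have "\<dots> = ?N0"
    unfolding fact_poly_jacobi_poly_0 poch P0_def by (simp add: algebra_simps)
  finally show "poly ?C 0 = ?N0 / ((real n + 1) * (real n + 2))"
    using nz by (intro eq_divide_imp) (simp_all add: mult.commute)
  have "(real n + 1) * (real n + 2) * poly ?C 1
      = c2 * (real n + 1) * (real n + 2) * (fact n * poly (?J n) 1)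
        + c1 * (real n + 2) * (fact (n + 1) * poly (?J (n + 1)) 1)
        + c0 * (fact (n + 2) * poly (?J (n + 2)) 1)"
    unfolding fact by (simp add: defs algebra_simps)
  also have "\<dots> = ?N1"
    unfolding fact_poly_jacobi_poly_1 poch P1_def by (simp add: algebra_simps)
  finally show "poly ?C 1 = ?N1 / ((real n + 1) * (real n + 2))"
    using nz by (intro eq_divide_imp) (simp_all add: mult.commute)
  have "(real n + 2) * ((a + 1) * (real n + 1) * poly (pderiv ?C) 0)
      = c2 * (real n + 1) * (real n + 2) * ((a + 1) * (fact n * poly (pderiv (?J n)) 0))
        + c1 * (real n + 2) * ((a + 1) * (fact (n + 1) * poly (pderiv (?J (n + 1))) 0))
        + c0 * ((a + 1) * (fact (n + 2) * poly (pderiv (?J (n + 2))) 0))"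
    unfolding fact by (simp add: defs algebra_simps)
  also have "\<dots> = (real n + 2) * ?M0"
    unfolding fact_poly_pderiv_jacobi_poly_0 poch P0_def by (simp add: algebra_simps)
  finally have "(a + 1) * (real n + 1) * poly (pderiv ?C) 0 = ?M0"
    by (rule mult_left_cancel[THEN iffD1, rotated]) simp
  then show "poly (pderiv ?C) 0 = ?M0 / ((a + 1) * (real n + 1))"
    using nz by (intro eq_divide_imp) (simp_all add: mult.commute)
  have "(real n + 2) * ((b + 1) * (real n + 1) * poly (pderiv ?C) 1)
      = c2 * (real n + 1) * (real n + 2) * ((b + 1) * (fact n * poly (pderiv (?J n)) 1))
        + c1 * (real n + 2) * ((b + 1) * (fact (n + 1) * poly (pderiv (?J (n + 1))) 1))
        + c0 * ((b + 1) * (fact (n + 2) * poly (pderiv (?J (n + 2))) 1))"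
    unfolding fact by (simp add: defs algebra_simps)
  also have "\<dots> = (real n + 2) * ?M1"
    unfolding fact_poly_pderiv_jacobi_poly_1 poch P1_def by (simp add: algebra_simps)
  finally have "(b + 1) * (real n + 1) * poly (pderiv ?C) 1 = ?M1"
    by (rule mult_left_cancel[THEN iffD1, rotated]) simp
  then show "poly (pderiv ?C) 1 = ?M1 / ((b + 1) * (real n + 1))"
    using nz by (intro eq_divide_imp) (simp_all add: mult.commute)
qed

end

section \<open>The matrix weight\<close>

lemma coeff_mult_degree_le_sum:
  fixes p q :: "real poly"
  assumes "degree p \<le> n" "degree q \<le> m"
  shows "coeff (p * q) (n + m) = coeff p n * coeff q m"
proof -
  have vanish: "coeff p i * coeff q (n + m - i) = 0" if "i \<noteq> n" for i
  proof (cases "i < n")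
    case True
    then show ?thesis using assms(2) by (simp add: coeff_eq_0)
  next
    case False
    then show ?thesis using assms(1) that by (simp add: coeff_eq_0)
  qed
  then have "(\<Sum>i\<le>n + m. coeff p i * coeff q (n + m - i)) = coeff p n * coeff q m"
    by (subst sum.remove[of _ n]) (simp_all add: vanish)
  then show ?thesis
    by (simp add: coeff_mult)
qed

lemma quadratic_form_pos:
  fixes A B C x y :: real
  assumes A: "A > 0" and D: "A * C - B * B > 0"
  shows "A * x * x + 2 * B * x * y + C * y * y \<ge> 0"
    and "A * x * x + 2 * B * x * y + C * y * y = 0 \<Longrightarrow> x = 0 \<and> y = 0"
proof -
  have id: "A * (A * x * x + 2 * B * x * y + C * y * y) = (A * x + B * y)^2 + (A * C - B * B) * y^2"
    by (simp add: power2_eq_square algebra_simps)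
  have "(A * x + B * y)^2 + (A * C - B * B) * y^2 \<ge> 0" using D by simp
  then show "A * x * x + 2 * B * x * y + C * y * y \<ge> 0"
    using A id by (metis zero_le_mult_iff not_less)
  assume "A * x * x + 2 * B * x * y + C * y * y = 0"
  then have "(A * x + B * y)^2 + (A * C - B * B) * y^2 = 0" using id by simp
  moreover have "(A * x + B * y)^2 \<ge> 0" "(A * C - B * B) * y^2 \<ge> 0" using D by simp_all
  ultimately have "(A * C - B * B) * y^2 = 0" "(A * x + B * y)^2 = 0" by linarith+
  then have "y = 0" "A * x + B * y = 0" using D by simp_all
  then show "x = 0 \<and> y = 0" using A by simp
qed

locale jacobi_matrix_weight =
  fixes al be v :: real
  assumes al: "al > -1" and be: "be > -1"
    and v_lower: "\<bar>al - be\<bar> < \<bar>v\<bar>" and v_upper: "\<bar>v\<bar> < al + be + 2"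
begin

definition "a2 = v * (kappa al v be + 2) / kappa al v (-be)"
definition "a1 = -(kappa al v be + 2)"
definition "d2 = - v * (kappa al (-v) be + 2) / kappa al (-v) (-be)"
definition "d1 = -(kappa al (-v) be + 2)"
definition "w11 = [:al + 1, a1, a2:]"
definition "w12 = [:-(al + 1), al + be + 2:]"
definition "w22 = [:al + 1, d1, d2:]"

lemma v_neq_0: "v \<noteq> 0"
  using v_lower by auto

lemma kappa_signs:
  "(v > 0 \<and> kappa al v (-be) > 0 \<and> kappa al (-v) (-be) < 0) \<or>
   (v < 0 \<and> kappa al v (-be) < 0 \<and> kappa al (-v) (-be) > 0)"
  using v_lower by (auto simp: kappa_def abs_if split: if_splits)

lemma kappa_plus_2_pos: "kappa al v be + 2 > 0" "kappa al (-v) be + 2 > 0"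
  using v_upper by (auto simp: kappa_def abs_if split: if_splits)

lemma a2_pos: "a2 > 0"
proof -
  have "v / kappa al v (-be) > 0"
    using kappa_signs by (auto simp: divide_pos_pos divide_neg_neg)
  then show ?thesis
    using kappa_plus_2_pos unfolding a2_def by (metis mult_pos_pos times_divide_eq_left)
qed

lemma d2_pos: "d2 > 0"
proof -
  have "- v / kappa al (-v) (-be) > 0"
    using kappa_signs by (auto simp: divide_pos_neg divide_neg_pos)
  then show ?thesis
    using kappa_plus_2_pos unfolding d2_def by (metis mult_pos_pos times_divide_eq_left)
qed

lemma poly_w11: "poly w11 t = a2 * t^2 + a1 * t + (al + 1)"
  by (simp add: w11_def power2_eq_square algebra_simps)

lemma poly_w12: "poly w12 t = (al + be + 2) * t - (al + 1)"
  by (simp add: w12_def algebra_simps)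

lemma poly_w22: "poly w22 t = d2 * t^2 + d1 * t + (al + 1)"
  by (simp add: w22_def power2_eq_square algebra_simps)

lemma det_w: "w11 * w22 - w12 * w12 = smult (a2 * d2) endpoint_poly"
proof (rule poly_ext)
  fix t
  have nz: "al + v - be \<noteq> 0" "al - v - be \<noteq> 0" "al + v \<noteq> be" "al - v \<noteq> be"
    using kappa_signs by (auto simp: kappa_def)
  show "poly (w11 * w22 - w12 * w12) t = poly (smult (a2 * d2) endpoint_poly) t"
    unfolding poly_diff poly_mult poly_smult poly_w11 poly_w12 poly_w22 poly_endpoint_poly
      a1_def a2_def d1_def d2_def kappa_def
    by (simp add: divide_simps nz) algebra
qed

lemma det_w_pos: "0 < t \<Longrightarrow> t < 1 \<Longrightarrow> poly w11 t * poly w22 t - poly w12 t * poly w12 t > 0"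
  using arg_cong[OF det_w, of "\<lambda>p. poly p t"] a2_pos d2_pos by (simp add: poly_endpoint_poly)

text \<open>\<open>w11\<close> is positive at \<open>0\<close> and, the determinant being positive, cannot vanish in
  \<open>(0, 1)\<close>.\<close>

lemma w11_pos:
  assumes "0 < t" "t < 1"
  shows "poly w11 t > 0"
proof (rule ccontr)
  assume "\<not> poly w11 t > 0"
  moreover have "0 \<le> poly w11 0"
    using al by (simp add: poly_w11)
  moreover have "continuous_on {0..t} (poly w11)"
    by (intro continuous_intros)
  ultimately obtain s where s: "0 \<le> s" "s \<le> t" "poly w11 s = 0"
    using IVT2'[of "poly w11" t 0 0] assms by auto
  have "s \<noteq> 0"
    using s al by (auto simp: poly_w11)
  then have "poly w11 s * poly w22 s - poly w12 s * poly w12 s > 0"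
    using s assms by (intro det_w_pos) auto
  then show False
    using s(3) by (simp add: not_less)
qed

definition wm :: "2 \<Rightarrow> 2 \<Rightarrow> real poly" where
  "wm i j = (if i = 1 \<and> j = 1 then w11 else if i = 2 \<and> j = 2 then w22 else w12)"

lemma wm_simps [simp]: "wm 1 1 = w11" "wm 1 2 = w12" "wm 2 1 = w12" "wm 2 2 = w22"
  by (simp_all add: wm_def)

lemma degree_wm: "degree (wm i j) \<le> 2"
  by (auto simp: wm_def w11_def w12_def w22_def)

lemma Wtilde_nth: "Wtilde al be v t $ i $ j = poly (wm i j) t"
proof -
  have "Wtilde al be v t = mat2 (poly w11 t) (poly w12 t) (poly w12 t) (poly w22 t)"
    unfolding Wtilde_def poly_w11 poly_w12 poly_w22 a2_def a1_def d2_def d1_def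
    by (simp add: algebra_simps)
  then show ?thesis
    using exhaust_2[of i] exhaust_2[of j] by (auto simp: mat2_def)
qed

lemma Wmat_nth: "Wmat al be v t $ i $ j = jacobi_weight al be t * poly (wm i j) t"
  by (simp add: Wmat_def Wtilde_nth jacobi_weight_def)

section \<open>Uniqueness of \<open>P\<^sub>n W\<close>\<close>

lemma row_eq_0_if_orthogonal:
  fixes e1 e2 :: "real poly"
  assumes deg: "degree e1 \<le> n + 1" "degree e2 \<le> n + 1"
    and dvd: "endpoint_poly dvd (e1 * w22 - e2 * w12)" "endpoint_poly dvd (e2 * w11 - e1 * w12)"
    and orth: "jacobi_orthogonal al be n e1" "jacobi_orthogonal al be n e2"
  shows "e1 = 0 \<and> e2 = 0"
proof -
  define c where "c = a2 * d2"
  have c: "c > 0"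
    using a2_pos d2_pos by (simp add: c_def)
  obtain s1 where s1: "e1 * w22 - e2 * w12 = endpoint_poly * s1"
    using dvd(1) by (auto elim: dvdE)
  obtain s2 where s2: "e2 * w11 - e1 * w12 = endpoint_poly * s2"
    using dvd(2) by (auto elim: dvdE)
  have det: "w11 * w22 - w12 * w12 = smult c endpoint_poly"
    using det_w by (simp add: c_def)
  have "endpoint_poly * smult c e1 = e1 * (w11 * w22 - w12 * w12)"
    by (simp add: det mult_ac)
  also have "\<dots> = w11 * (e1 * w22 - e2 * w12) + w12 * (e2 * w11 - e1 * w12)"
    by (simp add: algebra_simps)
  also have "\<dots> = endpoint_poly * (w11 * s1 + w12 * s2)"
    unfolding s1 s2 by (simp add: algebra_simps)
  finally have E1: "smult c e1 = w11 * s1 + w12 * s2"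
    using endpoint_poly_neq_0 mult_left_cancel by blast
  have "endpoint_poly * smult c e2 = e2 * (w11 * w22 - w12 * w12)"
    by (simp add: det mult_ac)
  also have "\<dots> = w12 * (e1 * w22 - e2 * w12) + w22 * (e2 * w11 - e1 * w12)"
    by (simp add: algebra_simps)
  also have "\<dots> = endpoint_poly * (w12 * s1 + w22 * s2)"
    unfolding s1 s2 by (simp add: algebra_simps)
  finally have E2: "smult c e2 = w12 * s1 + w22 * s2"
    using endpoint_poly_neq_0 mult_left_cancel by blast
  have "degree (e1 * w22 - e2 * w12) \<le> n + 3" "degree (e2 * w11 - e1 * w12) \<le> n + 3"
    using deg degree_wm[of 1 1] degree_wm[of 1 2] degree_wm[of 2 2]
    by (auto intro!: degree_diff_le order.trans[OF degree_mult_le])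
  then have deg_s: "s1 = 0 \<or> degree s1 < n" "s2 = 0 \<or> degree s2 < n"
    unfolding s1 s2 by (auto dest: degree_endpoint_poly_quotient)
  define Q where "Q = e1 * s1 + e2 * s2"
  have quad: "c * poly Q t = poly w11 t * poly s1 t * poly s1 t
      + 2 * poly w12 t * poly s1 t * poly s2 t + poly w22 t * poly s2 t * poly s2 t" for t
  proof -
    have "c * poly Q t = poly (smult c e1) t * poly s1 t + poly (smult c e2) t * poly s2 t"
      by (simp add: Q_def algebra_simps)
    then show ?thesis
      unfolding E1 E2 by (simp add: algebra_simps)
  qed
  have "((\<lambda>t. poly e1 t * poly s1 t * jacobi_weight al be t
      + poly e2 t * poly s2 t * jacobi_weight al be t) has_integral 0 + 0) {0..1}"
    by (intro has_integral_add has_integral_jacobi_orthogonal[OF orth(1) deg_s(1)]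
        has_integral_jacobi_orthogonal[OF orth(2) deg_s(2)])
  then have int_Q: "((\<lambda>t. poly Q t * jacobi_weight al be t) has_integral 0) {0..1}"
    by (simp add: Q_def algebra_simps)
  have nonneg_Q: "poly Q t \<ge> 0" if "0 < t" "t < 1" for t
  proof -
    have "0 \<le> c * poly Q t"
      unfolding quad by (rule quadratic_form_pos(1)[OF w11_pos[OF that] det_w_pos[OF that]])
    then show ?thesis
      using c by (simp add: zero_le_mult_iff)
  qed
  have "Q = 0"
    by (rule poly_eq_0_if_nonneg_integral_eq_0[OF nonneg_Q int_Q])
  have s_roots: "poly s1 t = 0 \<and> poly s2 t = 0" if "0 < t" "t < 1" for t
  proof (rule quadratic_form_pos(2)[OF w11_pos[OF that] det_w_pos[OF that]])
    show "poly w11 t * poly s1 t * poly s1 t + 2 * poly w12 t * poly s1 t * poly s2 t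
        + poly w22 t * poly s2 t * poly s2 t = 0"
      using quad[of t] \<open>Q = 0\<close> by simp
  qed
  have "s1 = 0" "s2 = 0"
    using s_roots by (auto intro: poly_eq_0_if_roots_interval[of 0 1])
  then show ?thesis
    using E1 E2 c by simp
qed

lemma coeff_wm_2: "coeff (wm i j) 2 = (if i = 1 \<and> j = 1 then a2 else if i = 2 \<and> j = 2 then d2 else 0)"
  using exhaust_2[of i] exhaust_2[of j] by (auto simp: wm_def w11_def w12_def w22_def numeral_2_eq_2)

text \<open>The divisibility conditions say that \<open>f adj W \<equiv> 0\<close> modulo \<open>t\<^sup>2(1 - t)\<^sup>2 = det W / (a2 d2)\<close>,
  i.e. that \<open>f W\<^sup>-\<^sup>1\<close> is a polynomial.\<close>

definition monic_orthogonal_multiple :: "nat \<Rightarrow> (2 \<Rightarrow> 2 \<Rightarrow> real poly) \<Rightarrow> bool" where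
  "monic_orthogonal_multiple n f \<longleftrightarrow>
     (\<forall>i j. degree (f i j) \<le> n + 2 \<and> coeff (f i j) (n + 2) = coeff (wm i j) 2
        \<and> jacobi_orthogonal al be n (f i j)) \<and>
     (\<forall>i. endpoint_poly dvd (f i 1 * w22 - f i 2 * w12)
        \<and> endpoint_poly dvd (f i 2 * w11 - f i 1 * w12))"

lemma monic_orthogonal_multiple_unique:
  assumes f: "monic_orthogonal_multiple n f" and g: "monic_orthogonal_multiple n g"
  shows "f = g"
proof -
  have deg: "degree (f i j - g i j) \<le> n + 1" for i j
  proof (rule degree_le, intro allI impI)
    fix m assume "n + 1 < m"
    then consider "m = n + 2" | "n + 2 < m" by linarith
    moreover have fg: "degree (f i j) \<le> n + 2" "degree (g i j) \<le> n + 2"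
      "coeff (f i j) (n + 2) = coeff (g i j) (n + 2)"
      using f g unfolding monic_orthogonal_multiple_def by auto
    ultimately show "coeff (f i j - g i j) m = 0"
    proof cases
      case 2
      then have "degree (f i j) < m" "degree (g i j) < m"
        using fg by linarith+
      then show ?thesis by (simp add: coeff_eq_0)
    qed (use fg in simp)
  qed
  have rows: "f i 1 - g i 1 = 0 \<and> f i 2 - g i 2 = 0" for i
  proof (rule row_eq_0_if_orthogonal[OF deg deg])
    show "endpoint_poly dvd ((f i 1 - g i 1) * w22 - (f i 2 - g i 2) * w12)"
      using f g dvd_diff[of endpoint_poly "f i 1 * w22 - f i 2 * w12" "g i 1 * w22 - g i 2 * w12"]
      unfolding monic_orthogonal_multiple_def by (simp add: algebra_simps)
    show "endpoint_poly dvd ((f i 2 - g i 2) * w11 - (f i 1 - g i 1) * w12)"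
      using f g dvd_diff[of endpoint_poly "f i 2 * w11 - f i 1 * w12" "g i 2 * w11 - g i 1 * w12"]
      unfolding monic_orthogonal_multiple_def by (simp add: algebra_simps)
    show "jacobi_orthogonal al be n (f i 1 - g i 1)" "jacobi_orthogonal al be n (f i 2 - g i 2)"
      using f g unfolding monic_orthogonal_multiple_def by (auto intro: jacobi_orthogonal_diff)
  qed
  show ?thesis
  proof (intro ext)
    fix i j :: 2
    show "f i j = g i j"
      using rows[of i] exhaust_2[of j] by auto
  qed
qed

lemma monic_mpoly_entries:
  assumes "is_monic_mpoly n Pn"
  obtains p :: "2 \<Rightarrow> 2 \<Rightarrow> real poly" where "\<And>t i j. Pn t $ i $ j = poly (p i j) t"
    "\<And>i j. degree (p i j) \<le> n" "\<And>i j. coeff (p i j) n = (if i = j then 1 else 0)"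
proof -
  obtain A :: "nat \<Rightarrow> real^2^2" where A: "A n = mat 1" "\<And>t. Pn t = (\<Sum>k\<le>n. t ^ k *\<^sub>R A k)"
    using assms unfolding is_monic_mpoly_def by blast
  define p where "p i j = (\<Sum>k\<le>n. monom (A k $ i $ j) k)" for i j
  have "Pn t $ i $ j = poly (p i j) t" for t i j
    unfolding A(2) p_def by (simp add: poly_sum poly_monom mult.commute)
  moreover have "degree (p i j) \<le> n" for i j
    unfolding p_def by (intro degree_sum_le) (auto intro: order.trans[OF degree_monom_le])
  moreover have "coeff (p i j) n = (if i = j then 1 else 0)" for i j
    unfolding p_def by (simp add: coeff_sum coeff_monom A(1) mat_def)
  ultimately show ?thesis using that by blast
qed

definition unit_mat :: "2 \<Rightarrow> 2 \<Rightarrow> real^2^2" where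
  "unit_mat r c = (\<chi> a b. if a = r \<and> b = c then 1 else 0)"

text \<open>Test the orthogonality of \<open>P\<^sub>n\<close> against the matrix polynomial \<open>t\<^sup>k E\<^sub>1\<^sub>j\<close>.\<close>

lemma mult_Wtilde_orthogonal:
  assumes orth: "\<forall>m Q. m < n \<longrightarrow> is_mpoly m Q \<longrightarrow> mip (Wmat al be v) Pn Q = 0"
    and entries: "\<And>t i j. Pn t $ i $ j = poly (p i j) t"
  shows "jacobi_orthogonal al be n (p i 1 * wm 1 j + p i 2 * wm 2 j)"
  unfolding jacobi_orthogonal_def
proof (intro allI impI)
  fix k assume k: "k < n"
  define g where "g r = p r 1 * wm 1 j + p r 2 * wm 2 j" for r
  define Q where "Q t = t ^ k *\<^sub>R unit_mat 1 j" for t :: real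
  have "is_mpoly (n - 1) Q"
    unfolding is_mpoly_def
  proof (intro exI allI)
    fix t :: real
    show "Q t = (\<Sum>k'\<le>n - 1. t ^ k' *\<^sub>R (if k' = k then unit_mat 1 j else 0))"
      using k by (simp add: Q_def if_distrib[of "\<lambda>x. t ^ _ *\<^sub>R x"] sum.delta' cong: if_cong)
  qed
  moreover have "n - 1 < n"
    using k by simp
  ultimately have mip0: "mip (Wmat al be v) Pn Q = 0"
    using orth by blast
  define I where "I r = Beta (al + 1) (be + 1) *
    (\<Sum>i\<le>degree (g r * monom 1 k). coeff (g r * monom 1 k) i * moment_ratio al be i)" for r
  have int_g: "((\<lambda>t. poly (g r) t * t ^ k * jacobi_weight al be t) has_integral I r) {0..1}" for r
    using has_integral_poly_jacobi_weight[OF al be order.refl, of "g r * monom 1 k"]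
    by (simp add: I_def poly_monom mult_ac)
  have "Pn t ** Wmat al be v t ** transpose (Q t)
      = (poly (g 1) t * t ^ k * jacobi_weight al be t) *\<^sub>R unit_mat 1 1
        + (poly (g 2) t * t ^ k * jacobi_weight al be t) *\<^sub>R unit_mat 2 1" for t
    unfolding vec_eq_iff
    by (rule disjE[OF exhaust_2[of j]])
       (simp_all add: forall_2 matrix_matrix_mult_def sum_2 transpose_def Q_def unit_mat_def
         entries Wmat_nth g_def algebra_simps)
  then have "((\<lambda>t. Pn t ** Wmat al be v t ** transpose (Q t))
      has_integral (I 1 *\<^sub>R unit_mat 1 1 + I 2 *\<^sub>R unit_mat 2 1)) {0..1}"
    by (simp only:) (intro has_integral_add has_integral_scaleR_left int_g)
  then have "I 1 *\<^sub>R unit_mat 1 1 + I 2 *\<^sub>R unit_mat 2 1 = 0"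
    using mip0 unfolding mip_def by (simp add: integral_unique)
  then have "I 1 = 0" "I 2 = 0"
    by (auto simp: vec_eq_iff forall_2 unit_mat_def)
  then have "I i = 0"
    using exhaust_2[of i] by auto
  then show "((\<lambda>t. poly (p i 1 * wm 1 j + p i 2 * wm 2 j) t * t ^ k * jacobi_weight al be t)
      has_integral 0) {0..1}"
    using int_g[of i] by (simp add: g_def)
qed

lemma monic_orthogonal_multiple_mult_Wtilde:
  assumes monic: "is_monic_mpoly n Pn"
    and orth: "\<forall>m Q. m < n \<longrightarrow> is_mpoly m Q \<longrightarrow> mip (Wmat al be v) Pn Q = 0"
  obtains g where "monic_orthogonal_multiple n g"
    and "\<And>t. Pn t ** Wtilde al be v t = (\<chi> i j. poly (g i j) t)"
proof -
  obtain p where entries: "\<And>t i j. Pn t $ i $ j = poly (p i j) t"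
    and deg: "\<And>i j. degree (p i j) \<le> n" and lead: "\<And>i j. coeff (p i j) n = (if i = j then 1 else 0)"
    using monic_mpoly_entries[OF monic] by blast
  define g where "g i j = p i 1 * wm 1 j + p i 2 * wm 2 j" for i j
  have "Pn t ** Wtilde al be v t = (\<chi> i j. poly (g i j) t)" for t
    by (simp add: vec_eq_iff matrix_matrix_mult_def sum_2 entries Wtilde_nth g_def)
  moreover have "degree (g i j) \<le> n + 2" for i j
    unfolding g_def using deg degree_wm
    by (intro degree_add_le order.trans[OF degree_mult_le] add_mono) auto
  moreover have "coeff (g i j) (n + 2) = coeff (wm i j) 2" for i j
  proof -
    have "coeff (g i j) (n + 2)
        = coeff (p i 1) n * coeff (wm 1 j) 2 + coeff (p i 2) n * coeff (wm 2 j) 2"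
      unfolding g_def coeff_add by (simp only: coeff_mult_degree_le_sum[OF deg degree_wm])
    then show ?thesis
      using exhaust_2[of i] by (auto simp: lead)
  qed
  moreover have "endpoint_poly dvd (g i 1 * w22 - g i 2 * w12)"
    "endpoint_poly dvd (g i 2 * w11 - g i 1 * w12)" for i
  proof -
    have "g i 1 * w22 - g i 2 * w12 = p i 1 * (w11 * w22 - w12 * w12)"
      "g i 2 * w11 - g i 1 * w12 = p i 2 * (w11 * w22 - w12 * w12)"
      unfolding g_def by (simp_all add: algebra_simps)
    then show "endpoint_poly dvd (g i 1 * w22 - g i 2 * w12)"
      "endpoint_poly dvd (g i 2 * w11 - g i 1 * w12)"
      unfolding det_w by (simp_all add: dvd_smult)
  qed
  moreover have "jacobi_orthogonal al be n (g i j)" for i j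
    unfolding g_def by (rule mult_Wtilde_orthogonal[OF orth entries])
  ultimately show ?thesis
    using that unfolding monic_orthogonal_multiple_def by blast
qed

section \<open>The matrices built from the \<open>R\<^sub>n\<^sub>,\<^sub>k\<close> and the \<open>\<C>\<^sub>n\<^sub>,\<^sub>k\<close>\<close>

lemma nonzero_params:
  "v \<noteq> 0" "al + 1 \<noteq> 0" "be + 1 \<noteq> 0" "real n + 1 \<noteq> 0" "real n + 2 \<noteq> 0"
  "al + v + be + 2 * real n + 2 \<noteq> 0" "al - v + be + 2 * real n + 2 \<noteq> 0"
  "al + be + 2 * real n + 2 \<noteq> 0" "al + be + 2 * real n + 3 \<noteq> 0" "al + be + 2 * real n + 4 \<noteq> 0"
  "al + v - be \<noteq> 0" "al - v - be \<noteq> 0" "al + v \<noteq> be" "al - v \<noteq> be"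
  using v_neq_0 kappa_signs kappa_plus_2_pos al be by (auto simp: kappa_def)

definition R_form :: "nat \<Rightarrow> 2 \<Rightarrow> 2 \<Rightarrow> real poly" where
  "R_form n i j = shifted_jacobi_comb n al be
     (R2 al be v n $ i $ j) (R1 al be v n $ i $ j) (R0 al be v n $ i $ j)"

definition C_form :: "nat \<Rightarrow> 2 \<Rightarrow> 2 \<Rightarrow> real poly" where
  "C_form n i j = consecutive_jacobi_comb n al be
     (C2 al be v n $ i $ j) (C1 al be v n $ i $ j) (C0 al be v n $ i $ j)"

lemma w_endpoints:
  "poly w11 0 = al + 1" "poly w12 0 = - (al + 1)" "poly w22 0 = al + 1"
  "poly w11 1 = a2 + a1 + al + 1" "poly w12 1 = be + 1" "poly w22 1 = d2 + d1 + al + 1"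
  "poly (pderiv w11) 0 = a1" "poly (pderiv w12) 0 = al + be + 2" "poly (pderiv w22) 0 = d1"
  "poly (pderiv w11) 1 = 2 * a2 + a1" "poly (pderiv w12) 1 = al + be + 2" "poly (pderiv w22) 1 = 2 * d2 + d1"
  by (simp_all add: w11_def w12_def w22_def pderiv_pCons)

text \<open>The values and first derivatives at \<open>0\<close> and \<open>1\<close> are explicit
  (\<open>shifted_jacobi_comb_jets\<close>, \<open>consecutive_jacobi_comb_jets\<close>), so every condition of
  \<open>endpoint_poly_dvd\<close> below is a rational identity in \<open>al\<close>, \<open>be\<close>, \<open>v\<close> and \<open>n\<close>.\<close>

lemma R_form_dvd:
  "endpoint_poly dvd (R_form n i 1 * w22 - R_form n i 2 * w12)"
  "endpoint_poly dvd (R_form n i 2 * w11 - R_form n i 1 * w12)"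
proof -
  note nz = nonzero_params
  note defs = R_form_def R2_def R1_def R0_def kappa_def mat2_def w_endpoints a2_def a1_def d2_def d1_def
    pderiv_mult pderiv_diff shifted_jacobi_comb_jets[OF nz(2,3)]
  have "endpoint_poly dvd (R_form n 1 1 * w22 - R_form n 1 2 * w12)"
    "endpoint_poly dvd (R_form n 1 2 * w11 - R_form n 1 1 * w12)"
    "endpoint_poly dvd (R_form n 2 1 * w22 - R_form n 2 2 * w12)"
    "endpoint_poly dvd (R_form n 2 2 * w11 - R_form n 2 1 * w12)"
    by (intro endpoint_poly_dvd; simp add: defs; simp add: divide_simps nz; algebra)+
  then show "endpoint_poly dvd (R_form n i 1 * w22 - R_form n i 2 * w12)"
    "endpoint_poly dvd (R_form n i 2 * w11 - R_form n i 1 * w12)"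
    using exhaust_2[of i] by auto
qed

lemma C_form_minus_R_form_dvd: "endpoint_poly dvd (C_form n i j - R_form n i j)"
proof -
  note nz = nonzero_params
  note defs = R_form_def R2_def R1_def R0_def C_form_def C2_def C1_def C0_def kappa_def mat2_def
    pderiv_diff shifted_jacobi_comb_jets[OF nz(2,3)] consecutive_jacobi_comb_jets[OF nz(2,3)]
  have "endpoint_poly dvd (C_form n 1 1 - R_form n 1 1)" "endpoint_poly dvd (C_form n 1 2 - R_form n 1 2)"
    "endpoint_poly dvd (C_form n 2 1 - R_form n 2 1)" "endpoint_poly dvd (C_form n 2 2 - R_form n 2 2)"
    by (intro endpoint_poly_dvd; simp add: defs; simp add: divide_simps nz; algebra)+
  then show ?thesis
    using exhaust_2[of i] exhaust_2[of j] by auto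
qed

lemma R_form_lead: "coeff (R_form n i j) (n + 2) = coeff (wm i j) 2"
proof -
  define p where "p = pochhammer (al + be + real n + 3) n"
  have "p > 0"
    using al be unfolding p_def by (intro pochhammer_pos) simp
  moreover have "(-1::real) ^ n * (-1) ^ n = 1"
    by (simp add: power_mult_distrib[symmetric])
  moreover have "kappa al v (-be) \<noteq> 0" "kappa al (-v) (-be) \<noteq> 0"
    using kappa_signs by auto
  ultimately have "cc al be v n * ((-1) ^ n * p) = a2" "dd al be v n * ((-1) ^ n * p) = d2"
    unfolding cc_def dd_def a2_def d2_def p_def by (simp_all add: field_simps)
  moreover have "fact n * ((-(real n + al + be + 3)) gchoose n) = (-1) ^ n * p"
    unfolding p_def by (simp add: gbinomial_pochhammer algebra_simps)
  then have "coeff (R_form n i j) (n + 2) = R2 al be v n $ i $ j * ((-1) ^ n * p)"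
    unfolding R_form_def coeff_shifted_jacobi_comb_top by (metis mult.assoc mult.commute)
  ultimately show ?thesis
    using exhaust_2[of i] exhaust_2[of j] by (auto simp: coeff_wm_2 R2_def mat2_def)
qed

lemma monic_orthogonal_multiple_R_form: "monic_orthogonal_multiple n (R_form n)"
proof -
  have "degree (R_form n i j) \<le> n + 2" "jacobi_orthogonal al be n (R_form n i j)" for i j
    unfolding R_form_def
    by (rule degree_shifted_jacobi_comb, rule jacobi_orthogonal_shifted_jacobi_comb[OF al be])
  then show ?thesis
    using R_form_lead R_form_dvd unfolding monic_orthogonal_multiple_def by blast
qed

lemma C_form_eq_R_form: "C_form n i j = R_form n i j"
proof -
  obtain q where q: "C_form n i j - R_form n i j = endpoint_poly * q"
    using C_form_minus_R_form_dvd[of n i j] by (auto elim: dvdE)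
  have "degree (endpoint_poly * q) \<le> n + 3"
    unfolding q[symmetric] C_form_def R_form_def
    by (intro degree_diff_le order.trans[OF degree_consecutive_jacobi_comb]
        order.trans[OF degree_shifted_jacobi_comb]) simp_all
  then have deg_q: "q = 0 \<or> degree q < n"
    by (rule degree_endpoint_poly_quotient)
  have "jacobi_orthogonal al be n (endpoint_poly * q)"
    unfolding q[symmetric] C_form_def R_form_def
    by (intro jacobi_orthogonal_diff jacobi_orthogonal_consecutive_jacobi_comb
        jacobi_orthogonal_shifted_jacobi_comb al be)
  then have "((\<lambda>t. poly (endpoint_poly * q * q) t * jacobi_weight al be t) has_integral 0) {0..1}"
    unfolding poly_mult[of "endpoint_poly * q" q] by (rule has_integral_jacobi_orthogonal[OF _ deg_q])
  moreover have "poly (endpoint_poly * q * q) t \<ge> 0" for t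
    by (simp add: poly_endpoint_poly mult.assoc)
  ultimately have "endpoint_poly * q * q = 0"
    by (intro poly_eq_0_if_nonneg_integral_eq_0) auto
  then have "q = 0"
    using endpoint_poly_neq_0 by simp
  then show ?thesis
    using q by simp
qed

lemma R_form_matrix:
  "(\<chi> i j. poly (R_form n i j) t) = fact n *\<^sub>R
     ((jacobiP n (al + 2) be (1 - 2 * t) * t ^ 2) *\<^sub>R R2 al be v n
      + (jacobiP n (al + 1) be (1 - 2 * t) * t) *\<^sub>R R1 al be v n
      + jacobiP n al be (1 - 2 * t) *\<^sub>R R0 al be v n)"
  by (simp add: vec_eq_iff R_form_def shifted_jacobi_comb_def poly_jacobi_poly_eq_jacobiP
      algebra_simps power2_eq_square)

lemma C_form_matrix:
  "(\<chi> i j. poly (C_form n i j) t) = fact n *\<^sub>R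
     (jacobiP n al be (1 - 2 * t) *\<^sub>R C2 al be v n
      + jacobiP (n + 1) al be (1 - 2 * t) *\<^sub>R C1 al be v n
      + jacobiP (n + 2) al be (1 - 2 * t) *\<^sub>R C0 al be v n)"
  by (simp add: vec_eq_iff C_form_def consecutive_jacobi_comb_def poly_jacobi_poly_eq_jacobiP
      algebra_simps)

end

lemma eq_mult_matrix_inv:
  fixes A X :: "'a::comm_ring_1^'n^'n"
  assumes "invertible A" and "X ** A = B"
  shows "X = B ** matrix_inv A"
proof -
  have "A ** matrix_inv A = mat 1"
    using assms(1) unfolding invertible_def matrix_inv_def by (rule someI_ex[THEN conjunct1])
  then have "X = X ** (A ** matrix_inv A)"
    by (simp add: matrix_mul_rid)
  then show ?thesis
    using assms(2) by (simp add: matrix_mul_assoc)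
qed

theorem corollary3p3:
  fixes al be v :: real and P :: "nat \<Rightarrow> real \<Rightarrow> real^2^2"
  assumes "al > -1" and "be > -1"
    and "\<bar>al - be\<bar> < \<bar>v\<bar>" and "\<bar>v\<bar> < al + be + 2"
    and "monic_MOPS (Wmat al be v) P"
  shows "\<forall>n t. invertible (Wtilde al be v t) \<longrightarrow>
     P n t = fact n *\<^sub>R
        ((jacobiP n (al + 2) be (1 - 2 * t) * t ^ 2) *\<^sub>R R2 al be v n
         + (jacobiP n (al + 1) be (1 - 2 * t) * t) *\<^sub>R R1 al be v n
         + jacobiP n al be (1 - 2 * t) *\<^sub>R R0 al be v n) ** matrix_inv (Wtilde al be v t)
   \<and> P n t = fact n *\<^sub>R
        (jacobiP n al be (1 - 2 * t) *\<^sub>R C2 al be v n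
         + jacobiP (n + 1) al be (1 - 2 * t) *\<^sub>R C1 al be v n
         + jacobiP (n + 2) al be (1 - 2 * t) *\<^sub>R C0 al be v n) ** matrix_inv (Wtilde al be v t)"
proof -
  interpret jacobi_matrix_weight al be v
    using assms(1-4) by unfold_locales
  have key: "P n t = (\<chi> i j. poly (R_form n i j) t) ** matrix_inv (Wtilde al be v t)"
    if inv: "invertible (Wtilde al be v t)" for n t
  proof -
    obtain g where g: "monic_orthogonal_multiple n g"
      and PW: "\<And>t. P n t ** Wtilde al be v t = (\<chi> i j. poly (g i j) t)"
      using monic_orthogonal_multiple_mult_Wtilde assms(5) unfolding monic_MOPS_def by blast
    have "g = R_form n"
      using g monic_orthogonal_multiple_R_form by (rule monic_orthogonal_multiple_unique)
    then show ?thesis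
      using inv PW by (intro eq_mult_matrix_inv) auto
  qed
  show ?thesis
    using key R_form_matrix C_form_matrix unfolding C_form_eq_R_form by metis
qed

end
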